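(* Let $\varepsilon^*,C^*,\gamma>0$, $\lambda_1,\lambda_2>0$, and suppose $\lambda_1h\le\Delta t\le\lambda_2h$. Let $\check\rho^n,\check\rho^{n+1}\in\mathcal C$ with $\varepsilon^*\le\check\rho^{n+1}\le C^*$ and $0<\check\rho^n\le C^*$ pointwise, let $\rho^n,\rho^{n+1}\in\mathcal C$ be pointwise positive, set $\tilde\rho^k=\check\rho^k-\rho^k$ ($k=n,n+1$), and assume $\|\tilde\rho^n\|_2\le\Delta t^{15/4}+h^{15/4}$. Let $\tilde\psi^n\in\mathcal C$ with $\|\tilde\psi^n\|_\infty\le h$. Define $\tilde S^{n+\frac12}=\check S^{n+\frac12}-S^{n+\frac12}$, where $$\check S^{n+\frac12}=\ln\check\rho^{n+1}-\frac{\check\rho^{n+1}-\check\rho^n}{2\check\rho^{n+1}}-\frac{(\check\rho^{n+1}-\check\rho^n)^2}{6(\check\rho^{n+1})^2},\quad S^{n+\frac12}=\ln\rho^{n+1}-\frac{\rho^{n+1}-\rho^n}{2\rho^{n+1}}-\frac{(\rho^{n+1}-\rho^n)^2}{6(\rho^{n+1})^2},$$ let $\mathbb K=\{(i,j,k):\rho^{n+1}_{i,j,k}\ge 2C^*+1\}$ and $L^*=|\mathbb K|$. Then there exist constants $\check C_2$ (depending only on $\varepsilon^*,\gamma,C^*$) and $\check C_3$ (depending only on $C^*,\gamma$) such that, for $\Delta t,h$ sufficiently small, $$\langle\tilde\rho^{n+1},\gamma\tilde S^{n+\frac12}+\tilde\psi^n\rangle\ge\frac{C^*}{6}\gamma L^*h^3-\check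 C_2\big(\gamma^2\|\tilde\rho^n\|_2^2+\|\tilde\psi^n\|_2^2\big),$$ and, if $L^*=0$, $$\langle\tilde\rho^{n+1},\gamma\tilde S^{n+\frac12}+\tilde\psi^n\rangle\ge\check C_3\|\tilde\rho^{n+1}\|_2^2-\check C_2\big(\gamma^2\|\tilde\rho^n\|_2^2+\|\tilde\psi^n\|_2^2\big).$$
   Context: Grid: $\Omega=(a,b)^3$, $h=(b-a)/N$; $\mathcal C$ is the space of real grid functions on the cell centers indexed by $1\le i,j,k\le N$. $\langle f,g\rangle=h^3\sum_{i,j,k=1}^Nf_{i,j,k}g_{i,j,k}$, $\|f\|_2^2=\langle f,f\rangle$, $\|f\|_\infty=\max_{i,j,k}|f_{i,j,k}|$. All nonlinear functions are applied pointwise. *)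

theory Defs
  imports "HOL-Analysis.Analysis"
begin

type_synonym grid_fun = "nat \<times> nat \<times> nat \<Rightarrow> real"

definition grid :: "nat \<Rightarrow> (nat \<times> nat \<times> nat) set" where
  "grid N = {1..N} \<times> {1..N} \<times> {1..N}"

definition ginner :: "real \<Rightarrow> nat \<Rightarrow> grid_fun \<Rightarrow> grid_fun \<Rightarrow> real" where
  "ginner h N f g = h ^ 3 * (\<Sum>p\<in>grid N. f p * g p)"

definition gnorm2 :: "real \<Rightarrow> nat \<Rightarrow> grid_fun \<Rightarrow> real" where
  "gnorm2 h N f = sqrt (ginner h N f f)"

definition gnorminf :: "nat \<Rightarrow> grid_fun \<Rightarrow> real" where
  "gnorminf N f = Max ((\<lambda>p. \<bar>f p\<bar>) ` grid N)"

definition Sfun :: "real \<Rightarrow> real \<Rightarrow> real" where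
  "Sfun r1 r0 = ln r1 - (r1 - r0) / (2 * r1) - (r1 - r0)^2 / (6 * r1^2)"

end

theory Submission
  imports Defs
begin

text \<open>
  Pointwise, \<open>Sfun rc1 rc0 - Sfun r1 r0\<close> splits into a change of the second argument, which is
  Lipschitz with a constant depending only on \<open>\<epsilon>s\<close> and \<open>Cs\<close>, and a change of the first argument.
  Since \<open>\<partial>\<^sub>r Sfun r y - (23/48)/r = (5r - 4y)\<^sup>2 / (48 r\<^sup>3) \<ge> 0\<close>, the map \<open>r \<mapsto> Sfun r y - (23/48) ln r\<close>
  is nondecreasing, so the first-argument change, multiplied by \<open>rc1 - r1\<close>, dominates
  \<open>(23/48) (rc1 - r1) (ln rc1 - ln r1) \<ge> (23/48) (rc1 - r1)\<^sup>2 / max rc1 r1\<close>.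
  Where \<open>r1 \<ge> 2 Cs + 1\<close>, the logarithmic difference is at least \<open>1/2\<close> and \<open>\<bar>rc1 - r1\<bar> \<ge> Cs + 1\<close>;
  this beats the remaining terms as soon as \<open>rc0 - r0\<close> and \<open>psi\<close> are uniformly small, which the
  \<open>O(h\<^sup>1\<^sup>5\<^sup>/\<^sup>4)\<close> bound in \<open>\<ell>\<^sup>2\<close> guarantees via \<open>h\<^sup>3 \<bar>f p\<bar>\<^sup>2 \<le> \<parallel>f\<parallel>\<^sub>2\<^sup>2\<close>. Elsewhere
  \<open>max rc1 r1 \<le> 2 Cs + 1\<close> and Young's inequality absorbs the remaining terms.
\<close>

lemma Sfun_has_real_derivative:
  assumes "r > 0"
  shows "((\<lambda>r. Sfun r y) has_real_derivative (6*r^2 - 5*r*y + 2*y^2) / (6*r^3)) (at r)"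
  unfolding Sfun_def using assms
  by (auto intro!: derivative_eq_intros simp: field_simps power2_eq_square power3_eq_cube)

lemma Sfun_diff_ge_ln_diff:
  assumes "0 < u" "u \<le> v"
  shows "23/48 * (ln v - ln u) \<le> Sfun v y - Sfun u y"
proof -
  let ?g = "\<lambda>r. Sfun r y - 23/48 * ln r"
  have "?g u \<le> ?g v"
  proof (rule DERIV_nonneg_imp_nondecreasing[OF assms(2)])
    fix x assume "u \<le> x" "x \<le> v"
    with assms have x: "x > 0" by simp
    have "(?g has_real_derivative (6*x^2 - 5*x*y + 2*y^2) / (6*x^3) - 23/48 * (1/x)) (at x)"
      using x by (auto intro!: derivative_eq_intros Sfun_has_real_derivative)
    moreover have "(6*x^2 - 5*x*y + 2*y^2) / (6*x^3) - 23/48 * (1/x) = (5*x - 4*y)^2 / (48*x^3)"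
      using x by (simp add: field_simps power2_eq_square power3_eq_cube)
    ultimately show "\<exists>d. (?g has_real_derivative d) (at x) \<and> 0 \<le> d"
      using x by fastforce
  qed
  then show ?thesis by simp
qed

lemma Sfun_diff_mult_ge:
  assumes "x > 0" "z > 0"
  shows "23/48 * ((x - z) * (ln x - ln z)) \<le> (x - z) * (Sfun x y - Sfun z y)"
proof (cases "z \<le> x")
  case True
  have "(x - z) * (23/48 * (ln x - ln z)) \<le> (x - z) * (Sfun x y - Sfun z y)"
    using Sfun_diff_ge_ln_diff[OF assms(2) True] True by (intro mult_left_mono) auto
  then show ?thesis by (metis mult.left_commute)
next
  case False
  have "(z - x) * (23/48 * (ln z - ln x)) \<le> (z - x) * (Sfun z y - Sfun x y)"
    using Sfun_diff_ge_ln_diff[OF assms(1), of z y] False by (intro mult_left_mono) auto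
  moreover have "(z - x) * (23/48 * (ln z - ln x)) = 23/48 * ((x - z) * (ln x - ln z))"
    by algebra
  moreover have "(z - x) * (Sfun z y - Sfun x y) = (x - z) * (Sfun x y - Sfun z y)"
    by algebra
  ultimately show ?thesis by simp
qed

lemma Sfun_diff_second_arg:
  assumes "r > 0"
  shows "Sfun r a - Sfun r b = (a - b) * (5*r - a - b) / (6*r^2)"
  using assms unfolding Sfun_def by (simp add: field_simps power2_eq_square)

lemma ln_diff_mult_ge:
  fixes x y :: real
  assumes "x > 0" "y > 0"
  shows "(x - y)^2 / max x y \<le> (x - y) * (ln x - ln y)"
proof (cases "y \<le> x")
  case True
  have "(x - y) * ((x - y) / x) \<le> (x - y) * (ln x - ln y)"
    using ln_diff_le[OF assms(2,1)] True by (intro mult_left_mono) (auto simp: diff_divide_distrib)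
  with True show ?thesis by (simp add: power2_eq_square max_def)
next
  case False
  have "(y - x) * ((y - x) / y) \<le> (y - x) * (ln y - ln x)"
    using ln_diff_le[OF assms] False by (intro mult_left_mono) (auto simp: diff_divide_distrib)
  with False show ?thesis by (simp add: power2_eq_square max_def algebra_simps)
qed

lemma mult_le_Young:
  fixes a b \<mu> :: real
  assumes "\<mu> > 0"
  shows "a * b \<le> \<mu> * a^2 + b^2 / (4*\<mu>)"
proof -
  have "0 \<le> (2*\<mu>*a - b)^2 / (4*\<mu>)" using assms by simp
  also have "\<dots> = \<mu> * a^2 + b^2 / (4*\<mu>) - a * b"
    using assms by (simp add: field_simps power2_eq_square)
  finally show ?thesis by simp
qed

definition Sfun_lip :: "real \<Rightarrow> real \<Rightarrow> real" where
  "Sfun_lip Cs \<epsilon>s = (5*Cs + 1) / (6*\<epsilon>s^2)"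

lemma Sfun_second_arg_lipschitz:
  assumes "\<epsilon>s > 0" "\<epsilon>s \<le> r" "r \<le> Cs" "0 < a" "a \<le> Cs" "\<bar>a - b\<bar> \<le> 1"
  shows "\<bar>Sfun r a - Sfun r b\<bar> \<le> Sfun_lip Cs \<epsilon>s * \<bar>a - b\<bar>"
proof -
  have r: "r > 0" using assms by linarith
  have "\<bar>5*r - a - b\<bar> \<le> 5*Cs + 1" using assms by (auto simp: abs_le_iff)
  moreover have "6*\<epsilon>s^2 \<le> 6*r^2" using assms by (simp add: power_mono)
  ultimately have "\<bar>5*r - a - b\<bar> / (6*r^2) \<le> (5*Cs + 1) / (6*\<epsilon>s^2)"
    using assms by (intro frac_le) auto
  then have "\<bar>a - b\<bar> * (\<bar>5*r - a - b\<bar> / (6*r^2)) \<le> \<bar>a - b\<bar> * ((5*Cs + 1) / (6*\<epsilon>s^2))"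
    by (intro mult_left_mono) auto
  then show ?thesis
    unfolding Sfun_diff_second_arg[OF r] Sfun_lip_def by (simp add: abs_mult abs_divide mult.commute)
qed

lemma entropy_term_ge_log_term:
  assumes "rc1 > 0" "r1 > 0" "\<gamma> \<ge> 0"
    and lip: "\<bar>Sfun rc1 rc0 - Sfun rc1 r0\<bar> \<le> K * \<bar>rc0 - r0\<bar>"
  shows "23/48*\<gamma> * ((rc1 - r1) * (ln rc1 - ln r1)) - \<bar>rc1 - r1\<bar> * (\<gamma>*K*\<bar>rc0 - r0\<bar> + \<bar>ps\<bar>)
    \<le> (rc1 - r1) * (\<gamma> * (Sfun rc1 rc0 - Sfun r1 r0) + ps)"
proof -
  define D where "D = Sfun rc1 rc0 - Sfun rc1 r0"
  define M where "M = Sfun rc1 r0 - Sfun r1 r0"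
  have "23/48 * ((rc1 - r1) * (ln rc1 - ln r1)) \<le> (rc1 - r1) * M" (is "?l \<le> ?r")
    unfolding M_def by (rule Sfun_diff_mult_ge) (use assms in auto)
  then have main: "23/48*\<gamma> * ((rc1 - r1) * (ln rc1 - ln r1)) \<le> \<gamma> * ((rc1 - r1) * M)"
    using mult_left_mono[of ?l ?r \<gamma>] assms(3) by (simp add: mult.assoc)
  have "\<gamma> * \<bar>D\<bar> \<le> \<gamma> * (K * \<bar>rc0 - r0\<bar>)"
    using lip assms(3) unfolding D_def by (rule mult_left_mono)
  then have "\<bar>\<gamma>*D + ps\<bar> \<le> \<gamma>*K*\<bar>rc0 - r0\<bar> + \<bar>ps\<bar>"
    using abs_triangle_ineq[of "\<gamma>*D" ps] assms(3) by (simp add: abs_mult mult.assoc)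
  then have "\<bar>(rc1 - r1) * (\<gamma>*D + ps)\<bar> \<le> \<bar>rc1 - r1\<bar> * (\<gamma>*K*\<bar>rc0 - r0\<bar> + \<bar>ps\<bar>)"
    by (simp add: abs_mult mult_left_mono)
  moreover have "(rc1 - r1) * (\<gamma> * (Sfun rc1 rc0 - Sfun r1 r0) + ps)
      = \<gamma> * ((rc1 - r1) * M) + (rc1 - r1) * (\<gamma>*D + ps)"
    unfolding D_def M_def by (simp add: algebra_simps)
  ultimately show ?thesis using main by linarith
qed

lemma log_term_ge_of_large:
  fixes x z Cs \<gamma> e :: real
  assumes "0 < x" "x \<le> Cs" "2*Cs + 1 \<le> z" "\<gamma> \<ge> 0" "e \<le> 7*\<gamma>/96"
  shows "Cs/6*\<gamma> \<le> 23/48*\<gamma> * ((x - z) * (ln x - ln z)) - \<bar>x - z\<bar> * e"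
proof -
  define w where "w = z - x"
  have w: "Cs + 1 \<le> w" unfolding w_def using assms by linarith
  have "1/2 \<le> (z - x) / z" using assms by (simp add: field_simps)
  also have "\<dots> \<le> ln z - ln x" using ln_diff_le[of x z] assms by (simp add: diff_divide_distrib)
  finally have "w * (1/2) \<le> w * (ln z - ln x)" using w assms by (intro mult_left_mono) auto
  then have "23/48*\<gamma> * (w/2) \<le> 23/48*\<gamma> * ((x - z) * (ln x - ln z))"
    using assms(4) unfolding w_def by (intro mult_left_mono) (auto simp: algebra_simps)
  moreover have "\<bar>x - z\<bar> = w" unfolding w_def using assms by simp
  moreover have "w * e \<le> w * (7*\<gamma>/96)" using w assms by (intro mult_left_mono) auto
  moreover have "Cs*\<gamma> \<le> w*\<gamma>" using w assms by (intro mult_right_mono) auto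
  ultimately show ?thesis by (simp add: algebra_simps)
qed

lemma log_term_ge_of_bounded:
  fixes x z M \<mu> \<gamma> e :: real
  assumes "0 < x" "0 < z" "x \<le> M" "z \<le> M" "\<mu> > 0" "96*\<mu>*M \<le> 23*\<gamma>"
  shows "\<mu> * (x - z)^2 - e^2 / (4*\<mu>) \<le> 23/48*\<gamma> * ((x - z) * (ln x - ln z)) - \<bar>x - z\<bar> * e"
proof -
  have M: "M > 0" using assms by linarith
  then have \<gamma>: "\<gamma> > 0" using assms(5,6) by (smt (verit) mult_pos_pos)
  have "96*\<mu>*M * (x - z)^2 \<le> 23*\<gamma> * (x - z)^2"
    using assms(6) by (rule mult_right_mono) simp
  then have "2*\<mu> * (x - z)^2 \<le> 23/48*\<gamma> * ((x - z)^2 / M)"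
    using M by (simp add: field_simps)
  also have "\<dots> \<le> 23/48*\<gamma> * ((x - z)^2 / max x z)"
    using assms \<gamma> by (intro mult_left_mono divide_left_mono) auto
  also have "\<dots> \<le> 23/48*\<gamma> * ((x - z) * (ln x - ln z))"
    using ln_diff_mult_ge[OF assms(1,2)] \<gamma> by (intro mult_left_mono) auto
  finally show ?thesis
    using mult_le_Young[OF assms(5), of "\<bar>x - z\<bar>" e] by simp
qed

text \<open>\<open>coercivity_const\<close> and \<open>error_const\<close> are the constants \<open>C\<^sub>3\<close> and \<open>C\<^sub>2\<close> of the theorem.\<close>

definition coercivity_const :: "real \<Rightarrow> real \<Rightarrow> real" where
  "coercivity_const Cs \<gamma> = 23*\<gamma> / (96*(2*Cs + 1))"

definition error_const :: "real \<Rightarrow> real \<Rightarrow> real \<Rightarrow> real" where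
  "error_const Cs \<gamma> \<epsilon>s = max ((Sfun_lip Cs \<epsilon>s)^2) 1 / (2 * coercivity_const Cs \<gamma>)"

lemma coercivity_const_pos: "Cs > 0 \<Longrightarrow> \<gamma> > 0 \<Longrightarrow> coercivity_const Cs \<gamma> > 0"
  unfolding coercivity_const_def by simp

lemma error_const_pos: "Cs > 0 \<Longrightarrow> \<gamma> > 0 \<Longrightarrow> error_const Cs \<gamma> \<epsilon>s > 0"
  unfolding error_const_def using coercivity_const_pos[of Cs \<gamma>]
  by (intro divide_pos_pos) (auto simp: less_max_iff_disj)

lemma sq_error_le_error_const:
  fixes K t0 ps \<gamma> :: real
  shows "(\<gamma>*K*\<bar>t0\<bar> + \<bar>ps\<bar>)^2 \<le> 2 * max (K^2) 1 * (\<gamma>^2*t0^2 + ps^2)"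
proof -
  have "(\<gamma>*K*\<bar>t0\<bar> + \<bar>ps\<bar>)^2 \<le> 2 * (K^2 * (\<gamma>^2*t0^2) + ps^2)"
    using zero_le_power2[of "\<gamma>*K*\<bar>t0\<bar> - \<bar>ps\<bar>"]
    by (simp add: power2_eq_square algebra_simps)
  also have "\<dots> \<le> 2 * (max (K^2) 1 * (\<gamma>^2*t0^2) + max (K^2) 1 * ps^2)"
    using mult_right_mono[of 1 "max (K^2) 1" "ps^2"]
    by (intro mult_left_mono add_mono mult_right_mono) auto
  finally show ?thesis by (simp add: algebra_simps)
qed

lemma pointwise_entropy_estimate:
  fixes Cs \<gamma> \<epsilon>s rc0 rc1 r0 r1 ps :: real
  defines "K \<equiv> Sfun_lip Cs \<epsilon>s" and "\<mu> \<equiv> coercivity_const Cs \<gamma>"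
  assumes "Cs > 0" "\<gamma> > 0" "\<epsilon>s > 0" "\<epsilon>s \<le> rc1" "rc1 \<le> Cs" "0 < rc0" "rc0 \<le> Cs" "0 < r1"
    and t0: "\<bar>rc0 - r0\<bar> \<le> 1" "K * \<bar>rc0 - r0\<bar> \<le> 7/192" and ps: "\<bar>ps\<bar> \<le> 7*\<gamma>/192"
  shows "(if 2*Cs + 1 \<le> r1 then Cs/6*\<gamma> else \<mu> * (rc1 - r1)^2)
      - error_const Cs \<gamma> \<epsilon>s * (\<gamma>^2 * (rc0 - r0)^2 + ps^2)
    \<le> (rc1 - r1) * (\<gamma> * (Sfun rc1 rc0 - Sfun r1 r0) + ps)"
proof -
  define e where "e = \<gamma>*K*\<bar>rc0 - r0\<bar> + \<bar>ps\<bar>"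
  have \<mu>: "\<mu> > 0" unfolding \<mu>_def using assms by (simp add: coercivity_const_pos)
  have lip: "\<bar>Sfun rc1 rc0 - Sfun rc1 r0\<bar> \<le> K * \<bar>rc0 - r0\<bar>"
    unfolding K_def by (rule Sfun_second_arg_lipschitz) (use assms in auto)
  have base: "23/48*\<gamma> * ((rc1 - r1) * (ln rc1 - ln r1)) - \<bar>rc1 - r1\<bar> * e
      \<le> (rc1 - r1) * (\<gamma> * (Sfun rc1 rc0 - Sfun r1 r0) + ps)"
    unfolding e_def by (rule entropy_term_ge_log_term[OF _ _ _ lip]) (use assms in auto)
  have err: "e^2 / (4*\<mu>) \<le> error_const Cs \<gamma> \<epsilon>s * (\<gamma>^2 * (rc0 - r0)^2 + ps^2)"
    using divide_right_mono[OF sq_error_le_error_const[of \<gamma> K "rc0 - r0" ps], of "4*\<mu>"] \<mu>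
    unfolding e_def error_const_def K_def \<mu>_def by simp
  show ?thesis
  proof (cases "2*Cs + 1 \<le> r1")
    case True
    have "\<gamma> * (K*\<bar>rc0 - r0\<bar>) \<le> \<gamma> * (7/192)" using t0 assms by (intro mult_left_mono) auto
    then have "e \<le> 7*\<gamma>/96" unfolding e_def using ps by (simp add: mult.assoc)
    then have "Cs/6*\<gamma> \<le> 23/48*\<gamma> * ((rc1 - r1) * (ln rc1 - ln r1)) - \<bar>rc1 - r1\<bar> * e"
      by (intro log_term_ge_of_large) (use assms True in auto)
    moreover have "0 \<le> e^2 / (4*\<mu>)" using \<mu> by simp
    ultimately show ?thesis using True base err by simp
  next
    case False
    have "\<mu> * (rc1 - r1)^2 - e^2 / (4*\<mu>)
        \<le> 23/48*\<gamma> * ((rc1 - r1) * (ln rc1 - ln r1)) - \<bar>rc1 - r1\<bar> * e"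
      by (rule log_term_ge_of_bounded[where M = "2*Cs + 1"])
        (use assms False \<mu> in \<open>auto simp: coercivity_const_def field_simps\<close>)
    then show ?thesis using False base err by simp
  qed
qed

lemma finite_grid: "finite (grid N)"
  unfolding grid_def by simp

lemma gnorm2_sq: "h \<ge> 0 \<Longrightarrow> (gnorm2 h N f)^2 = h^3 * (\<Sum>p\<in>grid N. (f p)^2)"
  unfolding gnorm2_def ginner_def by (simp add: sum_nonneg power2_eq_square)

lemma sq_le_gnorm2:
  assumes "h \<ge> 0" "p \<in> grid N"
  shows "h^3 * (f p)^2 \<le> (gnorm2 h N f)^2"
  unfolding gnorm2_sq[OF assms(1)] using assms
  by (intro mult_left_mono member_le_sum) (auto simp: finite_grid)

lemma abs_le_gnorminf: "p \<in> grid N \<Longrightarrow> \<bar>f p\<bar> \<le> gnorminf N f"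
  unfolding gnorminf_def by (rule Max_ge) (auto simp: finite_grid)

lemma grid_entropy_estimate:
  fixes Cs \<gamma> \<epsilon>s h :: real and N :: nat and rc0 rc1 r0 r1 psi :: grid_fun
  defines "lhs \<equiv> ginner h N (\<lambda>p. rc1 p - r1 p)
      (\<lambda>p. \<gamma> * (Sfun (rc1 p) (rc0 p) - Sfun (r1 p) (r0 p)) + psi p)"
    and "err \<equiv> error_const Cs \<gamma> \<epsilon>s * (\<gamma>^2 * (gnorm2 h N (\<lambda>p. rc0 p - r0 p))^2 + (gnorm2 h N psi)^2)"
    and "KK \<equiv> {p \<in> grid N. 2*Cs + 1 \<le> r1 p}"
  assumes "Cs > 0" "\<gamma> > 0" "\<epsilon>s > 0" "h \<ge> 0"
    and rc1: "\<forall>p\<in>grid N. \<epsilon>s \<le> rc1 p \<and> rc1 p \<le> Cs"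
    and rc0: "\<forall>p\<in>grid N. 0 < rc0 p \<and> rc0 p \<le> Cs"
    and r1: "\<forall>p\<in>grid N. 0 < r1 p"
    and t0: "\<forall>p\<in>grid N. \<bar>rc0 p - r0 p\<bar> \<le> 1 \<and> Sfun_lip Cs \<epsilon>s * \<bar>rc0 p - r0 p\<bar> \<le> 7/192"
    and psi: "\<forall>p\<in>grid N. \<bar>psi p\<bar> \<le> 7*\<gamma>/192"
  shows "Cs/6*\<gamma> * real (card KK) * h^3 - err \<le> lhs"
    and "card KK = 0 \<Longrightarrow> coercivity_const Cs \<gamma> * (gnorm2 h N (\<lambda>p. rc1 p - r1 p))^2 - err \<le> lhs"
proof -
  define G where "G p = (if 2*Cs + 1 \<le> r1 p then Cs/6*\<gamma> else coercivity_const Cs \<gamma> * (rc1 p - r1 p)^2)"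
    for p
  define E where "E p = error_const Cs \<gamma> \<epsilon>s * (\<gamma>^2 * (rc0 p - r0 p)^2 + (psi p)^2)" for p
  have "G p - E p \<le> (rc1 p - r1 p) * (\<gamma> * (Sfun (rc1 p) (rc0 p) - Sfun (r1 p) (r0 p)) + psi p)"
    if "p \<in> grid N" for p
    unfolding G_def E_def
    by (rule pointwise_entropy_estimate) (use assms that in auto)
  then have "h^3 * (\<Sum>p\<in>grid N. G p - E p) \<le> lhs"
    unfolding lhs_def ginner_def using assms(7) by (intro mult_left_mono sum_mono) auto
  moreover have "h^3 * (\<Sum>p\<in>grid N. E p) = err"
    unfolding err_def E_def gnorm2_sq[OF assms(7)]
    by (simp add: sum_distrib_left sum.distrib algebra_simps)
  ultimately have main: "h^3 * (\<Sum>p\<in>grid N. G p) - err \<le> lhs"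
    by (simp add: sum_subtractf right_diff_distrib)
  have "(\<Sum>p\<in>KK. Cs/6*\<gamma>) = (\<Sum>p\<in>grid N. if 2*Cs + 1 \<le> r1 p then Cs/6*\<gamma> else 0)"
    unfolding KK_def by (rule sum.inter_filter[OF finite_grid])
  also have "\<dots> \<le> (\<Sum>p\<in>grid N. G p)"
    unfolding G_def using coercivity_const_pos[OF assms(4,5)] by (intro sum_mono) auto
  finally have "h^3 * (Cs/6*\<gamma> * real (card KK)) \<le> h^3 * (\<Sum>p\<in>grid N. G p)"
    using assms(7) by (intro mult_left_mono) (auto simp: mult.commute)
  then show "Cs/6*\<gamma> * real (card KK) * h^3 - err \<le> lhs" using main by (simp add: mult.commute)
  assume "card KK = 0"
  then have "KK = {}" unfolding KK_def by (simp add: finite_grid)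
  then have "\<forall>p\<in>grid N. \<not> 2*Cs + 1 \<le> r1 p" unfolding KK_def by blast
  then have "h^3 * (\<Sum>p\<in>grid N. G p) = coercivity_const Cs \<gamma> * (gnorm2 h N (\<lambda>p. rc1 p - r1 p))^2"
    unfolding G_def gnorm2_sq[OF assms(7)] by (simp add: sum_distrib_left algebra_simps)
  then show "coercivity_const Cs \<gamma> * (gnorm2 h N (\<lambda>p. rc1 p - r1 p))^2 - err \<le> lhs" using main by simp
qed

lemma gnorm2_bound_le:
  fixes h dt lam2 :: real
  assumes "0 < h" "h \<le> 1" "0 < dt" "dt \<le> lam2 * h"
  shows "dt powr (15/4) + h powr (15/4) \<le> (lam2 powr (15/4) + 1) * h^3"
proof -
  have h: "h powr (15/4) \<le> h^3"
    using powr_mono'[of 3 "15/4" h] assms by (simp add: powr_realpow)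
  have "dt powr (15/4) \<le> (lam2 * h) powr (15/4)"
    using assms by (intro powr_mono2) auto
  also have "\<dots> = lam2 powr (15/4) * h powr (15/4)"
    by (rule powr_mult)
  also have "\<dots> \<le> lam2 powr (15/4) * h^3"
    using h by (intro mult_left_mono) auto
  finally show ?thesis using h by (simp add: algebra_simps)
qed

lemma sq_le_of_gnorm2_le:
  fixes h dt lam2 :: real and f :: grid_fun
  assumes "0 < h" "h \<le> 1" "0 < dt" "dt \<le> lam2 * h"
    and "gnorm2 h N f \<le> dt powr (15/4) + h powr (15/4)" and "p \<in> grid N"
  shows "(f p)^2 \<le> (lam2 powr (15/4) + 1)^2 * h^3"
proof -
  define \<Lambda> where "\<Lambda> = lam2 powr (15/4) + 1"
  have "0 \<le> gnorm2 h N f"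
    unfolding gnorm2_def ginner_def using assms by (simp add: sum_nonneg)
  moreover have "gnorm2 h N f \<le> \<Lambda> * h^3"
    unfolding \<Lambda>_def using assms gnorm2_bound_le[OF assms(1-4)] by linarith
  ultimately have "(gnorm2 h N f)^2 \<le> (\<Lambda> * h^3)^2" by (auto intro: power_mono)
  then have "h^3 * (f p)^2 \<le> h^3 * (\<Lambda>^2 * h^3)"
    using sq_le_gnorm2[of h p N f] assms by (simp add: power2_eq_square algebra_simps)
  then show ?thesis unfolding \<Lambda>_def using assms by simp
qed

definition mesh_bound :: "real \<Rightarrow> real \<Rightarrow> real \<Rightarrow> real \<Rightarrow> real" where
  "mesh_bound Cs \<gamma> \<epsilon>s lam2 =
     min (min 1 (7*\<gamma>/192)) ((min 1 (7 / (192 * Sfun_lip Cs \<epsilon>s)) / (lam2 powr (15/4) + 1))^2)"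

lemma mesh_bound_pos:
  assumes "Cs > 0" "\<gamma> > 0" "\<epsilon>s > 0"
  shows "mesh_bound Cs \<gamma> \<epsilon>s lam2 > 0"
proof -
  have "0 < Sfun_lip Cs \<epsilon>s" unfolding Sfun_lip_def using assms by simp
  then have "0 < min 1 (7 / (192 * Sfun_lip Cs \<epsilon>s)) / (lam2 powr (15/4) + 1)"
    by (simp add: add_nonneg_pos)
  then show ?thesis unfolding mesh_bound_def min_less_iff_conj using assms
    by (intro conjI zero_less_power) auto
qed

lemma main_estimate:
  fixes Cs \<gamma> \<epsilon>s lam2 h dt :: real and N :: nat and rc0 rc1 r0 r1 psi :: grid_fun
  defines "lhs \<equiv> ginner h N (\<lambda>p. rc1 p - r1 p)
      (\<lambda>p. \<gamma> * (Sfun (rc1 p) (rc0 p) - Sfun (r1 p) (r0 p)) + psi p)"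
    and "err \<equiv> error_const Cs \<gamma> \<epsilon>s * (\<gamma>^2 * (gnorm2 h N (\<lambda>p. rc0 p - r0 p))^2 + (gnorm2 h N psi)^2)"
    and "KK \<equiv> {p \<in> grid N. 2*Cs + 1 \<le> r1 p}"
  assumes "Cs > 0" "\<gamma> > 0" "\<epsilon>s > 0" "0 < h" "h < mesh_bound Cs \<gamma> \<epsilon>s lam2"
    and "0 < lam1" "lam1 * h \<le> dt" "dt \<le> lam2 * h"
    and rc1: "\<forall>p\<in>grid N. \<epsilon>s \<le> rc1 p \<and> rc1 p \<le> Cs"
    and rc0: "\<forall>p\<in>grid N. 0 < rc0 p \<and> rc0 p \<le> Cs"
    and r1: "\<forall>p\<in>grid N. 0 < r1 p"
    and t0: "gnorm2 h N (\<lambda>p. rc0 p - r0 p) \<le> dt powr (15/4) + h powr (15/4)"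
    and psi: "gnorminf N psi \<le> h"
  shows "Cs/6*\<gamma> * real (card KK) * h^3 - err \<le> lhs"
    and "card KK = 0 \<Longrightarrow> coercivity_const Cs \<gamma> * (gnorm2 h N (\<lambda>p. rc1 p - r1 p))^2 - err \<le> lhs"
proof -
  define K where "K = Sfun_lip Cs \<epsilon>s"
  define \<eta> where "\<eta> = min 1 (7 / (192*K))"
  define \<Lambda> where "\<Lambda> = lam2 powr (15/4) + 1"
  have dt: "0 < dt" using assms(7,9,10) by (smt (verit) mult_pos_pos)
  have K: "K > 0" unfolding K_def Sfun_lip_def using assms by simp
  have \<Lambda>: "\<Lambda> > 0" unfolding \<Lambda>_def by (simp add: add_nonneg_pos)
  have \<eta>: "0 \<le> \<eta>" "\<eta> \<le> 1" "K * \<eta> \<le> 7/192"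
    unfolding \<eta>_def using K by (auto simp: min_def field_simps)
  have h: "h \<le> 1" "h \<le> 7*\<gamma>/192" "h \<le> (\<eta> / \<Lambda>)^2"
    using assms(8) unfolding mesh_bound_def \<eta>_def \<Lambda>_def K_def by auto
  have "\<bar>rc0 p - r0 p\<bar> \<le> \<eta>" if "p \<in> grid N" for p
  proof -
    have "(rc0 p - r0 p)^2 \<le> \<Lambda>^2 * h^3"
      unfolding \<Lambda>_def using sq_le_of_gnorm2_le[OF assms(7) h(1) dt assms(11) t0 that] by simp
    also have "\<dots> \<le> \<Lambda>^2 * h"
      using power_decreasing[of 1 3 h] assms(7) h(1) by (intro mult_left_mono) auto
    also have "\<dots> \<le> \<eta>^2"
      using h(3) \<Lambda> by (simp add: field_simps power_divide)
    finally have "\<bar>rc0 p - r0 p\<bar>^2 \<le> \<eta>^2" by simp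
    then show ?thesis using \<eta>(1) by (rule power2_le_imp_le)
  qed
  then have t0': "\<forall>p\<in>grid N. \<bar>rc0 p - r0 p\<bar> \<le> 1 \<and> Sfun_lip Cs \<epsilon>s * \<bar>rc0 p - r0 p\<bar> \<le> 7/192"
    using \<eta> K mult_left_mono[of _ \<eta> K] unfolding K_def by (meson less_imp_le order_trans)
  moreover have "\<forall>p\<in>grid N. \<bar>psi p\<bar> \<le> 7*\<gamma>/192"
    using abs_le_gnorminf psi h(2) by (meson order_trans)
  ultimately show "Cs/6*\<gamma> * real (card KK) * h^3 - err \<le> lhs"
    and "card KK = 0 \<Longrightarrow> coercivity_const Cs \<gamma> * (gnorm2 h N (\<lambda>p. rc1 p - r1 p))^2 - err \<le> lhs"
    unfolding lhs_def err_def KK_def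
    using grid_entropy_estimate[OF assms(4-6) less_imp_le[OF assms(7)] rc1 rc0 r1] by blast+
qed

theorem mainTheorem7:
  "\<forall>Cs>0. \<forall>\<gamma>>0. \<exists>C3>0. \<forall>\<epsilon>s>0. \<exists>C2>0.
     \<forall>lam1>0. \<forall>lam2>0. \<forall>a b::real. a < b \<longrightarrow>
     (\<exists>\<delta>>0. \<forall>(N::nat) (dt::real) (rc0::grid_fun) (rc1::grid_fun) (r0::grid_fun) (r1::grid_fun) (psi::grid_fun).
        let h = (b - a) / real N in
        N \<ge> 1 \<longrightarrow> h < \<delta> \<longrightarrow> dt < \<delta> \<longrightarrow>
        lam1 * h \<le> dt \<longrightarrow> dt \<le> lam2 * h \<longrightarrow>
        (\<forall>p\<in>grid N. \<epsilon>s \<le> rc1 p \<and> rc1 p \<le> Cs) \<longrightarrow>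
        (\<forall>p\<in>grid N. 0 < rc0 p \<and> rc0 p \<le> Cs) \<longrightarrow>
        (\<forall>p\<in>grid N. 0 < r0 p \<and> 0 < r1 p) \<longrightarrow>
        gnorm2 h N (\<lambda>p. rc0 p - r0 p) \<le> dt powr (15/4) + h powr (15/4) \<longrightarrow>
        gnorminf N psi \<le> h \<longrightarrow>
        (let t0 = (\<lambda>p. rc0 p - r0 p);
             t1 = (\<lambda>p. rc1 p - r1 p);
             tS = (\<lambda>p. Sfun (rc1 p) (rc0 p) - Sfun (r1 p) (r0 p));
             L = card {p \<in> grid N. r1 p \<ge> 2 * Cs + 1};
             lhs = ginner h N t1 (\<lambda>p. \<gamma> * tS p + psi p);
             err = C2 * (\<gamma>^2 * (gnorm2 h N t0)^2 + (gnorm2 h N psi)^2)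
         in lhs \<ge> Cs / 6 * \<gamma> * real L * h^3 - err
            \<and> (L = 0 \<longrightarrow> lhs \<ge> C3 * (gnorm2 h N t1)^2 - err)))"
  unfolding Let_def
proof (intro allI impI, goal_cases)
  case (1 Cs \<gamma>)
  show ?case
  proof (rule exI[of _ "coercivity_const Cs \<gamma>"], intro conjI allI impI, goal_cases)
    case (2 \<epsilon>s)
    show ?case
    proof (rule exI[of _ "error_const Cs \<gamma> \<epsilon>s"], intro conjI allI impI, goal_cases)
      case (2 lam1 lam2 a b)
      then have h: "0 < (b - a) / real N" if "1 \<le> N" for N
        using that by simp
      show ?case
      proof (rule exI[of _ "mesh_bound Cs \<gamma> \<epsilon>s lam2"], intro conjI allI impI)
        show "0 < mesh_bound Cs \<gamma> \<epsilon>s lam2"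
          using 1 \<open>\<epsilon>s > 0\<close> by (intro mesh_bound_pos) auto
      qed (rule main_estimate; use 1 2 \<open>\<epsilon>s > 0\<close> h in auto)+
    qed (use 1 in \<open>simp add: error_const_pos\<close>)
  qed (use 1 in \<open>simp add: coercivity_const_pos\<close>)
qed

end
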